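(* Let $n\ge 1$ be an integer. There exist a tensor $A\in\mathbb{C}^{2n\times 2n\times 2}$ with $\operatorname{rank}(A)=3n$ and a sequence of tensors $(A_k)_{k\in\mathbb{N}}\subset\mathbb{C}^{2n\times 2n\times 2}$ with $\operatorname{rank}(A_k)=2n$ for every $k$, such that $A_k\to A$ as $k\to\infty$ in the Euclidean (entrywise) topology.
   Context: $\mathbb{C}^{l\times m\times p}$ is the space of complex arrays $(a_{ijk})$ of size $l\times m\times p$. For vectors $\mathbf{x},\mathbf{y},\mathbf{z}$ of appropriate sizes, $\mathbf{x}\otimes\mathbf{y}\otimes\mathbf{z}=(x_iy_jz_k)$ is an elementary tensor. The tensor rank of a tensor is the least number of elementary tensors (over $\mathbb{C}$) whose sum equals it. *)

theory Defs
  imports "HOL-Analysis.Analysis"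
begin

text \<open>A tensor in C^{l x m x p} is represented as a function
  nat => nat => nat => complex; only entries with i < l, j < m, k < p matter.
  Indices are 0-based.\<close>

type_synonym tensor3 = "nat \<Rightarrow> nat \<Rightarrow> nat \<Rightarrow> complex"

definition sum_of_elementary ::
  "nat \<Rightarrow> nat \<Rightarrow> nat \<Rightarrow> nat \<Rightarrow> tensor3 \<Rightarrow> bool" where
  "sum_of_elementary l m p r T \<longleftrightarrow>
     (\<exists>x y z :: nat \<Rightarrow> nat \<Rightarrow> complex.
        \<forall>i<l. \<forall>j<m. \<forall>k<p. T i j k = (\<Sum>s<r. x s i * y s j * z s k))"

definition tensor_rank :: "nat \<Rightarrow> nat \<Rightarrow> nat \<Rightarrow> tensor3 \<Rightarrow> nat" where
  "tensor_rank l m p T = (LEAST r. sum_of_elementary l m p r T)"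

definition tensor_converges ::
  "nat \<Rightarrow> nat \<Rightarrow> nat \<Rightarrow> (nat \<Rightarrow> tensor3) \<Rightarrow> tensor3 \<Rightarrow> bool" where
  "tensor_converges l m p As A \<longleftrightarrow>
     (\<forall>i<l. \<forall>j<m. \<forall>k<p. (\<lambda>t. As t i j k) \<longlonglongrightarrow> A i j k)"

end

theory Submission
  imports Defs "HOL-Library.Function_Algebras"
begin

(*
  The limit is the pencil (I, J), where J is the direct sum of n nilpotent 2x2 Jordan blocks.
  Replacing J by J + e diag(0,1,0,1,...) with e \<noteq> 0 makes every block diagonalisable, so the
  perturbed pencils have rank 2n, and no less since one slice is I.

  For rank (I, J) \<ge> 3n, write a decomposition with r terms as I = X D0 Y^T and J = X D1 Y^T
  (xmult is X and diag_mult k is Dk Y^T). The vectors D0 Y^T e_j, j < 2n, are mapped by X onto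
  the unit vectors, while f u = D1 Y^T u - D0 Y^T J u (kernel_map) always lies in the kernel of X;
  hence r \<ge> 2n + dim (im f). Finally dim (im f) \<ge> n: if f u = f k with J k = 0 and f (J u) = 0
  then J u = 0, so u \<mapsto> (f u mod f (ker J), f (J u)) is injective on the odd coordinates.
*)

lemma homogeneous_system_nontrivial_solution:
  fixes M :: "'a \<Rightarrow> nat \<Rightarrow> complex"
  assumes "finite R" "card R < k"
  shows "\<exists>\<beta>. (\<exists>j<k. \<beta> j \<noteq> 0) \<and> (\<forall>i\<in>R. (\<Sum>j<k. M i j * \<beta> j) = 0)"
  using assms
proof (induction k arbitrary: R M)
  case 0
  then show ?case by simp
next
  case (Suc k)
  show ?case
  proof (cases "\<forall>i\<in>R. M i k = 0")
    case True
    show ?thesis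
      by (rule exI[of _ "\<lambda>j. if j = k then 1 else 0"]) (auto simp: True if_distrib cong: if_cong)
  next
    case False
    then obtain i0 where i0: "i0 \<in> R" "M i0 k \<noteq> 0" by blast
    define M' where "M' i j = M i j - M i k * M i0 j / M i0 k" for i j
    have "card (R - {i0}) < k"
      using Suc.prems i0 card_gt_0_iff[of R] by auto
    then obtain \<beta>' where
      \<beta>': "\<exists>j<k. \<beta>' j \<noteq> 0" "\<forall>i\<in>R - {i0}. (\<Sum>j<k. M' i j * \<beta>' j) = 0"
      using Suc.IH[of "R - {i0}" M'] Suc.prems by blast
    define S0 where "S0 = (\<Sum>j<k. M i0 j * \<beta>' j)"
    define \<beta> where "\<beta> j = (if j < k then \<beta>' j else - S0 / M i0 k)" for j
    have row: "(\<Sum>j<Suc k. M i j * \<beta> j) = (\<Sum>j<k. M' i j * \<beta>' j)" for i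
      by (simp add: \<beta>_def M'_def S0_def algebra_simps sum_subtractf sum_distrib_left sum_divide_distrib)
    have "(\<Sum>j<k. M' i0 j * \<beta>' j) = 0"
      using i0(2) by (simp add: M'_def sum_subtractf sum_distrib_left[symmetric] mult_ac)
    moreover have "\<exists>j<Suc k. \<beta> j \<noteq> 0"
      using \<beta>'(1) by (auto simp: \<beta>_def)
    ultimately show ?thesis
      using \<beta>'(2) by (intro exI[of _ \<beta>]) (metis DiffI row singletonD)
  qed
qed

lemma (in vector_space_pair) independent_Un_kernel:
  assumes L: "Vector_Spaces.linear s1 s2 L" and inj: "inj_on L C" and indep_C: "vs2.independent (L ` C)"
    and indep_B: "vs1.independent B" and ker: "\<And>b. b \<in> B \<Longrightarrow> L b = 0"
  shows "vs1.independent (C \<union> B)" and "C \<inter> B = {}"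
proof -
  show "C \<inter> B = {}"
    using ker indep_C vs2.dependent_zero[of "L ` C"] by (metis disjoint_iff image_eqI)
  show "vs1.independent (C \<union> B)"
    unfolding vs1.independent_explicit_module
  proof (intro allI impI)
    fix t u v
    assume t: "finite t" "t \<subseteq> C \<union> B" and comb: "(\<Sum>w\<in>t. u w *a w) = 0" and v: "v \<in> t"
    have "(\<Sum>w\<in>t. u w *b L w) = L (\<Sum>w\<in>t. u w *a w)"
      by (simp add: linear_sum[OF L] linear_scale[OF L])
    then have "0 = (\<Sum>w\<in>t. u w *b L w)"
      using comb by (simp add: linear_0[OF L])
    also have "\<dots> = (\<Sum>w\<in>t \<inter> C. u w *b L w)"
      using t ker by (intro sum.mono_neutral_right) auto
    also have "\<dots> = (\<Sum>c\<in>L ` (t \<inter> C). u (inv_into C L c) *b c)"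
      using inj by (subst sum.reindex) (auto intro: inj_on_subset)
    finally have on_C: "u w = 0" if "w \<in> t \<inter> C" for w
      using vs2.independentD[OF indep_C, of "L ` (t \<inter> C)" "\<lambda>c. u (inv_into C L c)" "L w"]
        that t inj by auto
    have "(\<Sum>w\<in>t - C. u w *a w) = (\<Sum>w\<in>t. u w *a w)"
      using t on_C by (intro sum.mono_neutral_left) auto
    then have "u w = 0" if "w \<in> t - C" for w
      using vs1.independentD[OF indep_B, of "t - C" u w] comb t that by auto
    then show "u v = 0"
      using on_C v by blast
  qed
qed

definition cscale :: "complex \<Rightarrow> (nat \<Rightarrow> complex) \<Rightarrow> nat \<Rightarrow> complex" where
  "cscale c v = (\<lambda>i. c * v i)"

lemma cscale_apply [simp]: "cscale c v i = c * v i"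
  by (simp add: cscale_def)

interpretation V: vector_space cscale
  by unfold_locales (auto simp: fun_eq_iff algebra_simps)

interpretation VV: vector_space_pair cscale cscale ..

lemma sum_fun_apply: "(\<Sum>a\<in>A. f a) i = (\<Sum>a\<in>A. f a i)"
  for f :: "'a \<Rightarrow> 'b \<Rightarrow> 'c::comm_monoid_add"
  by (induction A rule: infinite_finite_induct) auto

definition unit_vec :: "nat \<Rightarrow> nat \<Rightarrow> complex" where
  "unit_vec j = (\<lambda>i. if i = j then 1 else 0)"

lemma independent_unit_vecs: "V.independent (unit_vec ` A)"
  unfolding V.independent_explicit_module
proof (intro allI impI)
  fix t u v
  assume t: "finite t" "t \<subseteq> unit_vec ` A" and comb: "(\<Sum>w\<in>t. cscale (u w) w) = 0" and v: "v \<in> t"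
  obtain j where j: "v = unit_vec j"
    using t v by blast
  have "0 = (\<Sum>w\<in>t. cscale (u w) w) j"
    using comb by simp
  also have "\<dots> = (\<Sum>w\<in>t. if w = v then u w else 0)"
    unfolding sum_fun_apply
  proof (intro sum.cong refl)
    fix w assume "w \<in> t"
    then obtain i where "w = unit_vec i"
      using t by blast
    then show "cscale (u w) w j = (if w = v then u w else 0)"
      by (auto simp: j unit_vec_def fun_eq_iff)
  qed
  finally show "u v = 0"
    using t v by simp
qed

lemma in_span_unit_vecs:
  assumes "\<And>s. s \<ge> r \<Longrightarrow> v s = 0"
  shows "v \<in> V.span (unit_vec ` {..<r})"
proof -
  have "v = (\<Sum>s<r. cscale (v s) (unit_vec s))"
    using assms by (auto simp: fun_eq_iff sum_fun_apply unit_vec_def not_less if_distrib cong: if_cong)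
  also have "\<dots> \<in> V.span (unit_vec ` {..<r})"
    by (intro V.span_sum V.span_scale V.span_base) auto
  finally show ?thesis .
qed

lemma (in module) representation_eq_0_outside:
  assumes "independent B" "B' \<subseteq> B" "v \<in> span B'" "b \<notin> B'"
  shows "representation B v b = 0"
  using representation_extend[OF assms(1,3,2)] representation_ne_zero[of B' v b] assms(4) by auto

lemma (in module) combination_in_span_subset:
  assumes B: "independent B" "finite B" and "B' \<subseteq> B"
    and w: "\<And>i. i \<in> I \<Longrightarrow> w i \<in> span B"
    and outside: "\<And>b. b \<in> B - B' \<Longrightarrow> (\<Sum>i\<in>I. representation B (w i) b * c i) = 0"
  shows "(\<Sum>i\<in>I. c i *s w i) \<in> span B'"
proof -
  let ?v = "\<Sum>i\<in>I. c i *s w i"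
  have v: "?v \<in> span B"
    using w by (intro span_sum span_scale) auto
  have "representation B ?v = (\<lambda>b. \<Sum>i\<in>I. representation B (c i *s w i) b)"
    using w by (intro representation_sum[OF B(1)] span_scale)
  also have "\<dots> = (\<lambda>b. \<Sum>i\<in>I. representation B (w i) b * c i)"
    using w by (intro ext sum.cong) (simp_all add: representation_scale[OF B(1)] mult.commute)
  finally have rep: "representation B ?v b = (\<Sum>i\<in>I. representation B (w i) b * c i)" for b
    by simp
  have "?v = (\<Sum>b\<in>B. representation B ?v b *s b)"
    using sum_representation_eq[OF B(1) v B(2)] by simp
  also have "\<dots> = (\<Sum>b\<in>B'. representation B ?v b *s b)"
    using B(2) assms(3) outside by (intro sum.mono_neutral_right) (auto simp: rep)
  also have "\<dots> \<in> span B'"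
    by (intro span_sum span_scale span_base)
  finally show ?thesis .
qed

lemma linear_cscaleI:
  assumes "\<And>u v. L (u + v) = L u + L v" and "\<And>c u. L (cscale c u) = cscale c (L u)"
  shows "Vector_Spaces.linear cscale cscale L"
  using assms V.vector_space_axioms by (simp add: Vector_Spaces.linear_iff)

(* Only the 2n x 2n corner is ever used: it is the direct sum of n copies of [[0,1],[0,0]]. *)
definition jordan_nil :: "nat \<Rightarrow> nat \<Rightarrow> complex" where
  "jordan_nil i j = (if even i \<and> j = Suc i then 1 else 0)"

definition jordan_nil_mult :: "nat \<Rightarrow> (nat \<Rightarrow> complex) \<Rightarrow> nat \<Rightarrow> complex" where
  "jordan_nil_mult n u = (\<lambda>i. if i < 2*n \<and> even i then u (Suc i) else 0)"

lemma jordan_nil_mult_eq_sum: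
  assumes "i < 2*n"
  shows "(\<Sum>j<2*n. jordan_nil i j * u j) = jordan_nil_mult n u i"
proof -
  have "(\<Sum>j<2*n. jordan_nil i j * u j) = (\<Sum>j<2*n. if even i \<and> j = Suc i then u j else 0)"
    by (rule sum.cong) (auto simp: jordan_nil_def)
  moreover have "even i \<Longrightarrow> Suc i < 2*n"
    using assms by presburger
  ultimately show ?thesis
    by (cases "even i") (simp_all add: jordan_nil_mult_def)
qed

lemma jordan_nil_mult_nilpotent: "jordan_nil_mult n (jordan_nil_mult n u) = 0"
  by (simp add: jordan_nil_mult_def fun_eq_iff)

lemma jordan_nil_mult_odd_unit_vec: "i < n \<Longrightarrow> jordan_nil_mult n (unit_vec (Suc (2*i))) = unit_vec (2*i)"
  by (auto simp: jordan_nil_mult_def unit_vec_def fun_eq_iff)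

lemma jordan_nil_mult_even_unit_vec: "jordan_nil_mult n (unit_vec (2*i)) = 0"
  by (auto simp: jordan_nil_mult_def unit_vec_def fun_eq_iff) presburger

lemma linear_jordan_nil_mult: "Vector_Spaces.linear cscale cscale (jordan_nil_mult n)"
  by (rule linear_cscaleI) (auto simp: jordan_nil_mult_def fun_eq_iff)

locale identity_slice_decomposition =
  fixes N r :: nat and x y z :: "nat \<Rightarrow> nat \<Rightarrow> complex"
  assumes slice_0: "\<And>i j. i < N \<Longrightarrow> j < N \<Longrightarrow>
    (\<Sum>s<r. x s i * y s j * z s 0) = (if i = j then 1 else 0)"
begin

definition diag_mult :: "nat \<Rightarrow> (nat \<Rightarrow> complex) \<Rightarrow> nat \<Rightarrow> complex" where
  "diag_mult k u = (\<lambda>s. if s < r then z s k * (\<Sum>j<N. y s j * u j) else 0)"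

definition xmult :: "(nat \<Rightarrow> complex) \<Rightarrow> nat \<Rightarrow> complex" where
  "xmult w = (\<lambda>i. if i < N then \<Sum>s<r. x s i * w s else 0)"

lemma linear_diag_mult: "Vector_Spaces.linear cscale cscale (diag_mult k)"
  by (rule linear_cscaleI)
    (auto simp: diag_mult_def fun_eq_iff algebra_simps sum.distrib sum_distrib_left)

lemma linear_xmult: "Vector_Spaces.linear cscale cscale xmult"
  by (rule linear_cscaleI)
    (auto simp: xmult_def fun_eq_iff algebra_simps sum.distrib sum_distrib_left)

lemma xmult_diag_mult:
  "xmult (diag_mult k u) i = (if i < N then \<Sum>j<N. (\<Sum>s<r. x s i * y s j * z s k) * u j else 0)"
proof -
  have "(\<Sum>s<r. x s i * (z s k * (\<Sum>j<N. y s j * u j))) = (\<Sum>s<r. \<Sum>j<N. x s i * y s j * z s k * u j)"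
    by (simp add: sum_distrib_left mult_ac)
  also have "\<dots> = (\<Sum>j<N. (\<Sum>s<r. x s i * y s j * z s k) * u j)"
    by (subst sum.swap) (simp add: sum_distrib_right)
  finally show ?thesis
    by (simp add: xmult_def diag_mult_def)
qed

lemma xmult_diag_mult_0: "xmult (diag_mult 0 u) = (\<lambda>i. if i < N then u i else 0)"
proof
  fix i
  have "i < N \<Longrightarrow>
      (\<Sum>j<N. (\<Sum>s<r. x s i * y s j * z s 0) * u j) = (\<Sum>j<N. if i = j then u j else 0)"
    by (rule sum.cong) (auto simp: slice_0)
  then show "xmult (diag_mult 0 u) i = (if i < N then u i else 0)"
    by (simp add: xmult_diag_mult)
qed

lemma xmult_diag_mult_0_unit_vec: "j < N \<Longrightarrow> xmult (diag_mult 0 (unit_vec j)) = unit_vec j"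
  by (auto simp: xmult_diag_mult_0 unit_vec_def fun_eq_iff)

lemma diag_mult_vanishes: "s \<ge> r \<Longrightarrow> diag_mult k u s = 0"
  by (simp add: diag_mult_def)

lemma card_independent_kernel_le:
  assumes "V.independent B" and "\<And>b. b \<in> B \<Longrightarrow> xmult b = 0 \<and> (\<forall>s\<ge>r. b s = 0)"
  shows "N + card B \<le> r"
proof -
  define C where "C = (\<lambda>j. diag_mult 0 (unit_vec j)) ` {..<N}"
  have inj_unit_vec: "inj unit_vec"
    by (auto intro!: injI simp: unit_vec_def fun_eq_iff split: if_splits)
  have xmult_C: "xmult ` C = unit_vec ` {..<N}"
    unfolding C_def image_image by (intro image_cong) (auto simp: xmult_diag_mult_0_unit_vec)
  have "inj_on xmult C"
    unfolding C_def using inj_unit_vec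
    by (auto intro!: inj_onI simp: xmult_diag_mult_0_unit_vec dest: injD)
  moreover have "card C = N"
    using card_image[OF calculation] card_image[OF inj_on_subset[OF inj_unit_vec], of "{..<N}"] xmult_C
    by simp
  ultimately have indep: "V.independent (C \<union> B)" and disj: "C \<inter> B = {}"
    using VV.independent_Un_kernel[OF linear_xmult, of C B] assms independent_unit_vecs xmult_C
    by auto
  have "C \<union> B \<subseteq> V.span (unit_vec ` {..<r})"
    using assms(2) by (auto simp: C_def diag_mult_vanishes intro!: in_span_unit_vecs)
  then have "finite (C \<union> B) \<and> card (C \<union> B) \<le> card (unit_vec ` {..<r})"
    by (intro V.independent_span_bound indep) auto
  moreover have "card (unit_vec ` {..<r}) = r"
    using card_image[OF inj_on_subset[OF inj_unit_vec]] by simp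
  ultimately show ?thesis
    using \<open>card C = N\<close> disj card_Un_disjoint[of C B] by simp
qed

lemma N_le_r: "N \<le> r"
  using card_independent_kernel_le[OF V.independent_empty] by simp

end

locale IJ_decomposition = identity_slice_decomposition "2*n" r x y z for n r x y z +
  assumes slice_1: "\<And>i j. i < 2*n \<Longrightarrow> j < 2*n \<Longrightarrow>
    (\<Sum>s<r. x s i * y s j * z s 1) = jordan_nil i j"
begin

definition kernel_map :: "(nat \<Rightarrow> complex) \<Rightarrow> nat \<Rightarrow> complex" where
  "kernel_map u = diag_mult 1 u - diag_mult 0 (jordan_nil_mult n u)"

lemma linear_kernel_map: "Vector_Spaces.linear cscale cscale kernel_map"
  using VV.linear_compose_sub[OF linear_diag_mult[of 1]
      Vector_Spaces.linear_compose[OF linear_jordan_nil_mult[of n] linear_diag_mult[of 0]]]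
  unfolding kernel_map_def o_def by simp

lemma kernel_map_vanishes: "s \<ge> r \<Longrightarrow> kernel_map u s = 0"
  by (simp add: kernel_map_def diag_mult_vanishes)

lemma xmult_diag_mult_0_jordan: "xmult (diag_mult 0 (jordan_nil_mult n u)) = jordan_nil_mult n u"
  by (auto simp: xmult_diag_mult_0 jordan_nil_mult_def fun_eq_iff)

lemma xmult_diag_mult_1: "xmult (diag_mult 1 u) = jordan_nil_mult n u"
proof
  fix i
  have "i < 2*n \<Longrightarrow> (\<Sum>j<2*n. (\<Sum>s<r. x s i * y s j * z s 1) * u j) = jordan_nil_mult n u i"
    using sum.cong[OF refl, of "{..<2*n}" "\<lambda>j. (\<Sum>s<r. x s i * y s j * z s 1) * u j"]
      slice_1 jordan_nil_mult_eq_sum by simp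
  then show "xmult (diag_mult 1 u) i = jordan_nil_mult n u i"
    by (simp add: xmult_diag_mult jordan_nil_mult_def)
qed

lemma xmult_kernel_map: "xmult (kernel_map u) = 0"
  unfolding kernel_map_def VV.linear_diff[OF linear_xmult] xmult_diag_mult_1 xmult_diag_mult_0_jordan
  by simp

lemma jordan_nil_mult_eq_0_if_kernel_map_eq:
  assumes Jk: "jordan_nil_mult n k = 0" and eq: "kernel_map u = kernel_map k"
    and J_kernel: "kernel_map (jordan_nil_mult n u) = 0"
  shows "jordan_nil_mult n u = 0"
proof -
  let ?Y = "\<lambda>s v. \<Sum>j<2*n. y s j * v j"
  have "z s 0 * ?Y s (jordan_nil_mult n u) = 0" if s: "s < r" for s
  proof -
    have "z s 1 * ?Y s u - z s 0 * ?Y s (jordan_nil_mult n u) = z s 1 * ?Y s k"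
      using fun_cong[OF eq, of s] s Jk by (simp add: kernel_map_def diag_mult_def)
    moreover have "z s 1 * ?Y s (jordan_nil_mult n u) = 0"
      using fun_cong[OF J_kernel, of s] s
      by (simp add: kernel_map_def diag_mult_def jordan_nil_mult_nilpotent)
    ultimately show ?thesis
      by (cases "z s 1 = 0") simp_all
  qed
  then have "diag_mult 0 (jordan_nil_mult n u) = 0"
    by (simp add: diag_mult_def fun_eq_iff)
  then show ?thesis
    using xmult_diag_mult_0_jordan[of u] VV.linear_0[OF linear_xmult] by simp
qed

lemma jordan_nil_mult_eq_0_if_kernel_map_in_image:
  assumes "kernel_map u \<in> kernel_map ` V.span ((\<lambda>i. unit_vec (2*i)) ` {..<n})"
    and "kernel_map (jordan_nil_mult n u) = 0"
  shows "jordan_nil_mult n u = 0"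
proof -
  obtain k where k: "k \<in> V.span ((\<lambda>i. unit_vec (2*i)) ` {..<n})" "kernel_map u = kernel_map k"
    using assms(1) by blast
  have "jordan_nil_mult n k = 0"
    by (rule VV.linear_eq_0_on_span[OF linear_jordan_nil_mult _ k(1)])
      (auto simp: jordan_nil_mult_even_unit_vec)
  then show ?thesis
    using jordan_nil_mult_eq_0_if_kernel_map_eq k(2) assms(2) by blast
qed

lemma card_kernel_map_basis_ge:
  fixes BG B :: "(nat \<Rightarrow> complex) set"
  defines "Ev \<equiv> (\<lambda>i. unit_vec (2*i)) ` {..<n}" and "Od \<equiv> (\<lambda>i. unit_vec (Suc (2*i))) ` {..<n}"
  assumes BG: "BG \<subseteq> kernel_map ` Ev" "kernel_map ` Ev \<subseteq> V.span BG"
    and B: "BG \<subseteq> B" "finite B" "V.independent B" "kernel_map ` Od \<subseteq> V.span B"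
  shows "n \<le> card B"
proof (rule ccontr)
  assume "\<not> n \<le> card B"
  define ev where "ev i = kernel_map (unit_vec (2*i))" for i
  define od where "od i = kernel_map (unit_vec (Suc (2*i)))" for i
  \<comment> \<open>coefficients of f (J h) along BG and of f h along B - BG, as linear forms in h\<close>
  define M where "M b i = V.representation B (if b \<in> BG then ev i else od i) b" for b i
  obtain \<beta> where \<beta>_nonzero: "\<exists>i<n. \<beta> i \<noteq> 0"
    and \<beta>_eqs: "\<And>b. b \<in> B \<Longrightarrow> (\<Sum>i<n. M b i * \<beta> i) = 0"
    using homogeneous_system_nontrivial_solution[of B n M] B(2) \<open>\<not> n \<le> card B\<close> by auto
  define h where "h = (\<Sum>i<n. cscale (\<beta> i) (unit_vec (Suc (2*i))))"
  have Jh: "jordan_nil_mult n h = (\<Sum>i<n. cscale (\<beta> i) (unit_vec (2*i)))"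
    unfolding h_def VV.linear_sum[OF linear_jordan_nil_mult]
    by (simp add: VV.linear_scale[OF linear_jordan_nil_mult] jordan_nil_mult_odd_unit_vec)
  have kernel_map_comb:
    "kernel_map (\<Sum>i<n. cscale (\<beta> i) (e i)) = (\<Sum>i<n. cscale (\<beta> i) (kernel_map (e i)))"
    for e
    by (simp add: VV.linear_sum[OF linear_kernel_map] VV.linear_scale[OF linear_kernel_map])
  have ev_BG: "ev i \<in> V.span BG" and ev_B: "ev i \<in> V.span B" and od_B: "od i \<in> V.span B"
    if "i < n" for i
    using BG(2) B(4) V.span_mono[OF B(1)] that by (auto simp: ev_def od_def Ev_def Od_def)
  have "kernel_map (jordan_nil_mult n h) \<in> V.span {}"
    unfolding Jh kernel_map_comb ev_def[symmetric]
  proof (rule V.combination_in_span_subset[OF B(3,2)])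
    fix b assume "b \<in> B - {}"
    then show "(\<Sum>i<n. V.representation B (ev i) b * \<beta> i) = 0"
      using \<beta>_eqs[of b] V.representation_eq_0_outside[OF B(3,1) ev_BG]
      by (cases "b \<in> BG") (simp_all add: M_def)
  qed (use ev_B in auto)
  then have "kernel_map (jordan_nil_mult n h) = 0"
    by simp
  moreover have "kernel_map h \<in> V.span BG"
    unfolding h_def kernel_map_comb od_def[symmetric]
  proof (rule V.combination_in_span_subset[OF B(3,2,1) od_B])
    fix b assume "b \<in> B - BG"
    then show "(\<Sum>i<n. V.representation B (od i) b * \<beta> i) = 0"
      using \<beta>_eqs[of b] by (simp add: M_def)
  qed simp
  then have "kernel_map h \<in> kernel_map ` V.span Ev"
    using V.span_mono[OF BG(1)] VV.linear_span_image[OF linear_kernel_map] by blast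
  ultimately have "jordan_nil_mult n h = 0"
    using jordan_nil_mult_eq_0_if_kernel_map_in_image unfolding Ev_def by blast
  moreover obtain i where "i < n" "\<beta> i \<noteq> 0"
    using \<beta>_nonzero by blast
  moreover have "jordan_nil_mult n h (2*i) = \<beta> i"
    using \<open>i < n\<close> by (simp add: Jh sum_fun_apply unit_vec_def if_distrib cong: if_cong)
  ultimately show False
    by simp
qed

lemma three_n_le_r: "3*n \<le> r"
proof -
  define Ev where "Ev = (\<lambda>i. unit_vec (2*i)) ` {..<n}"
  define Od where "Od = (\<lambda>i. unit_vec (Suc (2*i))) ` {..<n}"
  obtain BG where BG: "BG \<subseteq> kernel_map ` Ev" "V.independent BG" "kernel_map ` Ev \<subseteq> V.span BG"
    by (rule V.maximal_independent_subset)
  obtain B where B: "BG \<subseteq> B" "B \<subseteq> kernel_map ` Ev \<union> kernel_map ` Od" "V.independent B"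
      "kernel_map ` Ev \<union> kernel_map ` Od \<subseteq> V.span B"
    by (rule V.maximal_independent_subset_extend[of BG "kernel_map ` Ev \<union> kernel_map ` Od"]) (use BG in auto)
  have "finite B"
    using B(2) by (rule finite_subset) (simp add: Ev_def Od_def)
  then have "n \<le> card B"
    using card_kernel_map_basis_ge[of BG B, folded Ev_def Od_def] BG B by simp
  moreover have "2*n + card B \<le> r"
    using B(2,3) by (intro card_independent_kernel_le) (auto simp: xmult_kernel_map kernel_map_vanishes)
  ultimately show ?thesis
    by simp
qed

end

lemma tensor_rank_eqI:
  assumes "sum_of_elementary l m p r T" and "\<And>r'. sum_of_elementary l m p r' T \<Longrightarrow> r \<le> r'"
  shows "tensor_rank l m p T = r"
  unfolding tensor_rank_def using assms by (rule Least_equality)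

definition IJ_pencil :: "complex \<Rightarrow> tensor3" where
  "IJ_pencil e i j k = (if k = 0 then (if i = j then 1 else 0)
     else jordan_nil i j + (if i = j \<and> odd i then e else 0))"

lemma sum_lessThan_add:
  fixes g :: "nat \<Rightarrow> 'a::comm_monoid_add"
  shows "(\<Sum>s<a + b. g s) = (\<Sum>s<a. g s) + (\<Sum>s<b. g (a + s))"
  by (induction b) (simp_all add: add_ac)

lemma sum_over_block:
  fixes G :: "nat \<Rightarrow> complex"
  assumes i: "i < 2*n" and outside: "\<And>s. s div 2 \<noteq> i div 2 \<Longrightarrow> G s = 0"
  shows "(\<Sum>s<2*n. G s) = G (2*(i div 2)) + G (Suc (2*(i div 2)))"
proof -
  have "Suc (2*(i div 2)) < 2*n"
    using i by presburger
  then have block: "{2*(i div 2), Suc (2*(i div 2))} \<subseteq> {..<2*n}"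
    by auto
  have "(\<Sum>s<2*n. G s) = (\<Sum>s\<in>{2*(i div 2), Suc (2*(i div 2))}. G s)"
  proof (rule sum.mono_neutral_right[OF _ block])
    show "\<forall>s\<in>{..<2*n} - {2*(i div 2), Suc (2*(i div 2))}. G s = 0"
    proof
      fix s assume s: "s \<in> {..<2*n} - {2*(i div 2), Suc (2*(i div 2))}"
      have "s div 2 \<noteq> i div 2"
      proof
        assume "s div 2 = i div 2"
        then have "s = 2*(i div 2) \<or> s = Suc (2*(i div 2))"
          by presburger
        then show False
          using s by auto
      qed
      then show "G s = 0"
        by (rule outside)
    qed
  qed simp
  then show ?thesis
    by simp
qed

lemma sum_of_elementary_IJ_pencil_0: "sum_of_elementary (2*n) (2*n) 2 (3*n) (IJ_pencil 0)"
proof -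
  define xs where "xs s = unit_vec (if s < 2*n then s else 2*(s - 2*n))" for s
  define ys where "ys s = unit_vec (if s < 2*n then s else Suc (2*(s - 2*n)))" for s
  define zs where "zs s k = (if (s < 2*n) = (k = 0) then 1 else (0::complex))" for s k :: nat
  have "IJ_pencil 0 i j k = (\<Sum>s<3*n. xs s i * ys s j * zs s k)"
    if ij: "i < 2*n" "j < 2*n" for i j k
  proof -
    have "(\<Sum>s<2*n. xs s i * ys s j * zs s k) =
        (\<Sum>s<2*n. if s = i then (if i = j \<and> k = 0 then 1 else 0) else 0)"
      by (rule sum.cong) (auto simp: xs_def ys_def zs_def unit_vec_def)
    also have "\<dots> = (if i = j \<and> k = 0 then 1 else 0)"
      using ij by simp
    finally have identity_part: "(\<Sum>s<2*n. xs s i * ys s j * zs s k) = (if i = j \<and> k = 0 then 1 else 0)" .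
    have "xs (2*n + s) i * ys (2*n + s) j = (if s = i div 2 then jordan_nil i j else 0)" for s
      by (auto simp: xs_def ys_def unit_vec_def jordan_nil_def)
    then have "(\<Sum>s<n. xs (2*n + s) i * ys (2*n + s) j * zs (2*n + s) k)
        = (if k = 0 then 0 else \<Sum>s<n. if s = i div 2 then jordan_nil i j else 0)"
      by (simp add: zs_def)
    also have "\<dots> = (if k = 0 then 0 else jordan_nil i j)"
      using ij by auto
    finally have nilpotent_part: "(\<Sum>s<n. xs (2*n + s) i * ys (2*n + s) j * zs (2*n + s) k)
        = (if k = 0 then 0 else jordan_nil i j)" .
    show ?thesis
      using sum_lessThan_add[of "\<lambda>s. xs s i * ys s j * zs s k" "2*n" n] identity_part nilpotent_part
      by (simp add: IJ_pencil_def jordan_nil_def)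
  qed
  then show ?thesis
    unfolding sum_of_elementary_def by blast
qed

lemma sum_of_elementary_IJ_pencil:
  assumes "e \<noteq> 0"
  shows "sum_of_elementary (2*n) (2*n) 2 (2*n) (IJ_pencil e)"
proof -
  \<comment> \<open>[[0,1],[0,e]] = P diag(0,e) P^-1 with P = [[1,1],[0,e]], P^-1 = [[1,-q],[0,q]]:
    the x's are the columns of P, the y's the rows of P^-1\<close>
  define q where "q = 1 / e"
  have eq: "q * e = 1" "e * q = 1"
    using assms by (simp_all add: q_def)
  define xs where "xs s i = (if i = 2*(s div 2) then 1 else if odd s \<and> i = Suc (2*(s div 2)) then e else 0)"
    for s i
  define ys where "ys s j = (if even s then (if j = s then 1 else if j = Suc s then -q else 0)
                              else (if j = s then q else 0))" for s j
  define zs where "zs s k = (if k = 0 then 1 else if even s then 0 else e)" for s k :: nat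
  have "IJ_pencil e i j k = (\<Sum>s<2*n. xs s i * ys s j * zs s k)"
    if ij: "i < 2*n" "j < 2*n" "k < 2" for i j k
  proof -
    have k: "k = 0 \<or> k = 1"
      using ij by auto
    have "(\<Sum>s<2*n. xs s i * ys s j * zs s k) =
        xs (2*(i div 2)) i * ys (2*(i div 2)) j * zs (2*(i div 2)) k +
        xs (Suc (2*(i div 2))) i * ys (Suc (2*(i div 2))) j * zs (Suc (2*(i div 2))) k"
      by (rule sum_over_block[OF ij(1)]) (auto simp: xs_def)
    also have "\<dots> = IJ_pencil e i j k"
    proof (cases "even i")
      case True
      then have "2*(i div 2) = i" "2*(Suc i div 2) = i"
        by presburger+
      then show ?thesis
        using True k eq by (auto simp: xs_def ys_def zs_def IJ_pencil_def jordan_nil_def)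
    next
      case False
      then have "Suc (2*(i div 2)) = i" "2*(i div 2) \<noteq> i"
        by presburger+
      then show ?thesis
        using False k eq by (auto simp: xs_def ys_def zs_def IJ_pencil_def jordan_nil_def)
    qed
    finally show ?thesis
      by simp
  qed
  then show ?thesis
    unfolding sum_of_elementary_def by blast
qed

lemma tensor_rank_IJ_pencil_0: "tensor_rank (2*n) (2*n) 2 (IJ_pencil 0) = 3*n"
proof (rule tensor_rank_eqI[OF sum_of_elementary_IJ_pencil_0])
  fix r assume "sum_of_elementary (2*n) (2*n) 2 r (IJ_pencil 0)"
  then obtain x y z where
    slices: "\<And>i j k. i < 2*n \<Longrightarrow> j < 2*n \<Longrightarrow> k < 2 \<Longrightarrow>
      (\<Sum>s<r. x s i * y s j * z s k) = IJ_pencil 0 i j k"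
    unfolding sum_of_elementary_def by metis
  interpret IJ_decomposition n r x y z
    by unfold_locales (simp_all add: slices IJ_pencil_def)
  show "3*n \<le> r"
    by (rule three_n_le_r)
qed

lemma tensor_rank_IJ_pencil:
  assumes "e \<noteq> 0"
  shows "tensor_rank (2*n) (2*n) 2 (IJ_pencil e) = 2*n"
proof (rule tensor_rank_eqI[OF sum_of_elementary_IJ_pencil[OF assms]])
  fix r assume "sum_of_elementary (2*n) (2*n) 2 r (IJ_pencil e)"
  then obtain x y z where
    slices: "\<And>i j k. i < 2*n \<Longrightarrow> j < 2*n \<Longrightarrow> k < 2 \<Longrightarrow>
      (\<Sum>s<r. x s i * y s j * z s k) = IJ_pencil e i j k"
    unfolding sum_of_elementary_def by metis
  interpret identity_slice_decomposition "2*n" r x y z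
    by unfold_locales (simp add: slices IJ_pencil_def)
  show "2*n \<le> r"
    by (rule N_le_r)
qed

lemma IJ_pencil_converges:
  assumes "e \<longlonglongrightarrow> 0"
  shows "tensor_converges l m p (\<lambda>t. IJ_pencil (e t)) (IJ_pencil 0)"
  unfolding tensor_converges_def
proof (intro allI impI)
  fix i j k :: nat
  have "(\<lambda>t. if i = j \<and> odd i then e t else 0) \<longlonglongrightarrow> 0"
  proof (cases "i = j \<and> odd i")
    case True
    show ?thesis
      unfolding if_P[OF True] by (rule assms)
  next
    case False
    show ?thesis
      unfolding if_not_P[OF False] by simp
  qed
  then have "(\<lambda>t. jordan_nil i j + (if i = j \<and> odd i then e t else 0))
      \<longlonglongrightarrow> jordan_nil i j + 0"
    by (intro tendsto_intros)
  then show "(\<lambda>t. IJ_pencil (e t) i j k) \<longlonglongrightarrow> IJ_pencil 0 i j k"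
    by (simp add: IJ_pencil_def)
qed

theorem corollary2:
  fixes n :: nat
  assumes "n \<ge> 1"
  shows "\<exists>(A :: tensor3) (As :: nat \<Rightarrow> tensor3).
           tensor_rank (2*n) (2*n) 2 A = 3*n \<and>
           (\<forall>t. tensor_rank (2*n) (2*n) 2 (As t) = 2*n) \<and>
           tensor_converges (2*n) (2*n) 2 As A"
proof (intro exI conjI allI)
  show "tensor_rank (2*n) (2*n) 2 (IJ_pencil 0) = 3*n"
    by (rule tensor_rank_IJ_pencil_0)
  show "tensor_rank (2*n) (2*n) 2 (IJ_pencil (1 / of_nat (Suc t))) = 2*n" for t
    by (rule tensor_rank_IJ_pencil) (simp del: of_nat_Suc)
  have "(\<lambda>t. 1 / of_nat (Suc t) :: complex) \<longlonglongrightarrow> 0"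
    using LIMSEQ_Suc[OF lim_1_over_n] by simp
  then show "tensor_converges (2*n) (2*n) 2 (\<lambda>t. IJ_pencil (1 / of_nat (Suc t))) (IJ_pencil 0)"
    by (rule IJ_pencil_converges)
qed

end
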